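(* Let $n=n_{obs}+n_{mis}$ with $n_{obs}\ge2$, $n_{mis}\ge1$. Let $Y_1,\dots,Y_{n_{obs}}$ be i.i.d. $N(\mu,\sigma^2)$, with $\bar Y_{obs}$ their mean and $CSS=\sum_{i=1}^{n_{obs}}(Y_i-\bar Y_{obs})^2$. Fix a real constant $c_M$ with $n_{obs}-1+c_M>0$ and let $\hat\mu_{obs,M}=\bar Y_{obs}$, $\hat\sigma^2_{obs,M}=CSS/(n_{obs}-1+c_M)$. ML(-like) multiple imputation with $D\ge1$ imputations is defined as follows: for each $d=1,\dots,D$ independently, draw $Y_{imp,i,d}=\hat\mu_{obs,M}+\hat\sigma_{obs,M}Z_{imp,i,d}$ for $i=n_{obs}+1,\dots,n$ with $Z_{imp,i,d}$ i.i.d. $N(0,1)$ independent of the data, and let $\hat\mu_{SI,d}$ and $\hat\sigma^2_{SI,d}$ be the sample mean and sample variance (divisor $n-1$) of the $n$ values $Y_1,\dots,Y_{n_{obs}},Y_{imp,n_{obs}+1,d},\dots,Y_{imp,n,d}$. Let $\hat\mu_{MI,M}=\frac1D\sum_d\hat\mu_{SI,d}$ and $\hat\sigma^2_{MI,M}=\frac1D\sum_d\hat\sigma^2_{SI,d}$. Then for every $D\ge1$, $$E(\hat\mu_{MI,M})=\mu,\qquad E(\hat\sigma^2_{MI,M})-\sigma^2=-\sigma^2\frac{n_{mis}(c_M n+n_{obs}-1)}{(n-1)n(c_M+n_{obs}-1)}.$$ *)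

theory Defs
  imports "HOL-Probability.Probability"
begin

text \<open>Observed data Y i (i < nobs); standard normal noise Z i d (nobs \<le> i < n, d < D).
  Indices are 0-based.\<close>

definition ybar_obs :: "nat \<Rightarrow> (nat \<Rightarrow> 'a \<Rightarrow> real) \<Rightarrow> 'a \<Rightarrow> real" where
  "ybar_obs nobs Y \<omega> = (\<Sum>i<nobs. Y i \<omega>) / real nobs"

definition CSS :: "nat \<Rightarrow> (nat \<Rightarrow> 'a \<Rightarrow> real) \<Rightarrow> 'a \<Rightarrow> real" where
  "CSS nobs Y \<omega> = (\<Sum>i<nobs. (Y i \<omega> - ybar_obs nobs Y \<omega>)\<^sup>2)"

definition sigma2_obs_M :: "nat \<Rightarrow> real \<Rightarrow> (nat \<Rightarrow> 'a \<Rightarrow> real) \<Rightarrow> 'a \<Rightarrow> real" where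
  "sigma2_obs_M nobs cM Y \<omega> = CSS nobs Y \<omega> / (real nobs - 1 + cM)"

definition Ycomp :: "nat \<Rightarrow> real \<Rightarrow> (nat \<Rightarrow> 'a \<Rightarrow> real) \<Rightarrow> (nat \<Rightarrow> nat \<Rightarrow> 'a \<Rightarrow> real)
    \<Rightarrow> nat \<Rightarrow> nat \<Rightarrow> 'a \<Rightarrow> real" where
  "Ycomp nobs cM Y Z d i \<omega> =
     (if i < nobs then Y i \<omega>
      else ybar_obs nobs Y \<omega> + sqrt (sigma2_obs_M nobs cM Y \<omega>) * Z i d \<omega>)"

definition mu_SI :: "nat \<Rightarrow> nat \<Rightarrow> real \<Rightarrow> (nat \<Rightarrow> 'a \<Rightarrow> real) \<Rightarrow> (nat \<Rightarrow> nat \<Rightarrow> 'a \<Rightarrow> real)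
    \<Rightarrow> nat \<Rightarrow> 'a \<Rightarrow> real" where
  "mu_SI n nobs cM Y Z d \<omega> = (\<Sum>i<n. Ycomp nobs cM Y Z d i \<omega>) / real n"

definition sigma2_SI :: "nat \<Rightarrow> nat \<Rightarrow> real \<Rightarrow> (nat \<Rightarrow> 'a \<Rightarrow> real) \<Rightarrow> (nat \<Rightarrow> nat \<Rightarrow> 'a \<Rightarrow> real)
    \<Rightarrow> nat \<Rightarrow> 'a \<Rightarrow> real" where
  "sigma2_SI n nobs cM Y Z d \<omega> =
     (\<Sum>i<n. (Ycomp nobs cM Y Z d i \<omega> - mu_SI n nobs cM Y Z d \<omega>)\<^sup>2) / (real n - 1)"

definition mu_MI :: "nat \<Rightarrow> nat \<Rightarrow> nat \<Rightarrow> real \<Rightarrow> (nat \<Rightarrow> 'a \<Rightarrow> real) \<Rightarrow> (nat \<Rightarrow> nat \<Rightarrow> 'a \<Rightarrow> real)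
    \<Rightarrow> 'a \<Rightarrow> real" where
  "mu_MI D n nobs cM Y Z \<omega> = (\<Sum>d<D. mu_SI n nobs cM Y Z d \<omega>) / real D"

definition sigma2_MI :: "nat \<Rightarrow> nat \<Rightarrow> nat \<Rightarrow> real \<Rightarrow> (nat \<Rightarrow> 'a \<Rightarrow> real) \<Rightarrow> (nat \<Rightarrow> nat \<Rightarrow> 'a \<Rightarrow> real)
    \<Rightarrow> 'a \<Rightarrow> real" where
  "sigma2_MI D n nobs cM Y Z \<omega> = (\<Sum>d<D. sigma2_SI n nobs cM Y Z d \<omega>) / real D"

definition joint_family :: "(nat \<Rightarrow> 'a \<Rightarrow> real) \<Rightarrow> (nat \<Rightarrow> nat \<Rightarrow> 'a \<Rightarrow> real)
    \<Rightarrow> nat + nat \<times> nat \<Rightarrow> 'a \<Rightarrow> real" where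
  "joint_family Y Z k = (case k of Inl i \<Rightarrow> Y i | Inr (i, d) \<Rightarrow> Z i d)"

end

(*
  Write s for the square root of the ML-like variance estimate, and for the d-th imputation
  W_d = sum of Z_{i,d} and V_d = sum of Z_{i,d}^2 - W_d^2/n over the imputed indices.
  The d-th completed data set has mean Ybar_obs + s W_d / n and sum of squared deviations
  CSS + s^2 V_d.  The observed data are independent of the d-th imputation noise, and
  E W_d = 0, E V_d = n_mis (1 - 1/n), E CSS = (n_obs - 1) sigma^2.  Hence every single
  imputation gives an unbiased mean and a variance estimate with expectation
  ((n_obs - 1) sigma^2 + (n_obs - 1) sigma^2 / (n_obs - 1 + c_M) * n_mis (1 - 1/n)) / (n - 1);
  averaging over d leaves both expectations unchanged.
*)

theory Submission
  imports Defs
begin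

lemma sum_sq_dev_shift:
  fixes x :: "'i \<Rightarrow> real"
  assumes "finite S"
  shows "(\<Sum>i\<in>S. (x i - (\<Sum>j\<in>S. x j) / card S)\<^sup>2)
    = (\<Sum>i\<in>S. (x i - c)\<^sup>2) - card S * ((\<Sum>j\<in>S. x j) / card S - c)\<^sup>2"
proof (cases "S = {}")
  case False
  define m where "m = (\<Sum>j\<in>S. x j) / card S"
  have sum_dev: "(\<Sum>i\<in>S. x i - c) = card S * (m - c)"
    using assms False by (simp add: m_def sum_subtractf field_simps)
  have "(\<Sum>i\<in>S. (x i - m)\<^sup>2) = (\<Sum>i\<in>S. (x i - c)\<^sup>2 - 2 * (m - c) * (x i - c) + (m - c)\<^sup>2)"
    by (intro sum.cong) (auto simp: power2_eq_square algebra_simps)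
  also have "\<dots> = (\<Sum>i\<in>S. (x i - c)\<^sup>2) - 2 * (m - c) * (\<Sum>i\<in>S. x i - c) + card S * (m - c)\<^sup>2"
    by (simp add: sum.distrib sum_subtractf flip: sum_distrib_left)
  finally show ?thesis
    unfolding m_def[symmetric] sum_dev by (simp add: power2_eq_square)
qed simp

corollary sum_sq_dev_eq:
  fixes x :: "'i \<Rightarrow> real"
  assumes "finite S"
  shows "(\<Sum>i\<in>S. (x i - (\<Sum>j\<in>S. x j) / card S)\<^sup>2) = (\<Sum>i\<in>S. (x i)\<^sup>2) - (\<Sum>i\<in>S. x i)\<^sup>2 / card S"
  using sum_sq_dev_shift[OF assms, of x 0] by (simp add: power_divide power2_eq_square)

lemma (in prob_space) indep_vars_integral_mult:
  fixes X :: "'i \<Rightarrow> 'a \<Rightarrow> real" and F G :: "'a \<Rightarrow> real"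
  assumes indep: "indep_vars (\<lambda>_. borel) X I"
    and AB: "A \<inter> B = {}" "A \<subseteq> I" "B \<subseteq> I"
    and f: "f \<in> borel_measurable (PiM A (\<lambda>_. borel))"
    and g: "g \<in> borel_measurable (PiM B (\<lambda>_. borel))"
    and F: "\<And>\<omega>. \<omega> \<in> space M \<Longrightarrow> F \<omega> = f (\<lambda>i\<in>A. X i \<omega>)"
    and G: "\<And>\<omega>. \<omega> \<in> space M \<Longrightarrow> G \<omega> = g (\<lambda>i\<in>B. X i \<omega>)"
    and "integrable M F" "integrable M G"
  shows "integrable M (\<lambda>\<omega>. F \<omega> * G \<omega>) \<and> expectation (\<lambda>\<omega>. F \<omega> * G \<omega>) = expectation F * expectation G"
proof -
  let ?F = "\<lambda>\<omega>. f (\<lambda>i\<in>A. X i \<omega>)" and ?G = "\<lambda>\<omega>. g (\<lambda>i\<in>B. X i \<omega>)"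
  have FG: "indep_var borel ?F borel ?G"
    using indep_var_compose[OF indep_var_restrict[OF indep AB] f g] by (simp add: comp_def)
  have int_F: "integrable M ?F" and int_G: "integrable M ?G"
    using \<open>integrable M F\<close> \<open>integrable M G\<close>
    by (auto simp: F G cong: Bochner_Integration.integrable_cong)
  have "integrable M (\<lambda>\<omega>. ?F \<omega> * ?G \<omega>) \<and> expectation (\<lambda>\<omega>. ?F \<omega> * ?G \<omega>) = expectation ?F * expectation ?G"
    using indep_var_integrable[OF FG int_F int_G] indep_var_lebesgue_integral[OF FG int_F int_G] by simp
  then show ?thesis
    by (auto simp: F G cong: Bochner_Integration.integrable_cong Bochner_Integration.integral_cong)
qed

lemma (in prob_space) integrable_normal_distributed:
  assumes "0 < \<sigma>" and "distributed M lborel X (\<lambda>x. ennreal (normal_density \<mu> \<sigma> x))"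
  shows "integrable M X"
  using distributed_integrable_var[OF assms(2) normal_density_nonneg integrable_normal_moment_nz_1[OF assms(1)]] .

lemma (in prob_space) normal_distributed_second_moment:
  assumes "0 < \<sigma>" and X: "distributed M lborel X (\<lambda>x. ennreal (normal_density \<mu> \<sigma> x))"
  shows "integrable M (\<lambda>\<omega>. (X \<omega>)\<^sup>2) \<and> expectation (\<lambda>\<omega>. (X \<omega>)\<^sup>2) = \<mu>\<^sup>2 + \<sigma>\<^sup>2"
proof -
  have int_X: "integrable M X"
    using integrable_normal_distributed[OF \<open>0 < \<sigma>\<close> X] .
  have int_dev: "integrable M (\<lambda>\<omega>. (X \<omega> - \<mu>)\<^sup>2)"
    using distributed_integrable[OF X, of "\<lambda>x. (x - \<mu>)\<^sup>2"] integrable_normal_moment[OF \<open>0 < \<sigma>\<close>, of \<mu> 2]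
    by simp
  have "(\<lambda>\<omega>. (X \<omega>)\<^sup>2) = (\<lambda>\<omega>. (X \<omega> - \<mu>)\<^sup>2 + 2 * \<mu> * X \<omega> - \<mu>\<^sup>2)"
    by (auto simp: power2_eq_square algebra_simps)
  moreover have "expectation X = \<mu>" "variance X = \<sigma>\<^sup>2"
    using normal_distributed_expectation normal_distributed_variance assms by auto
  ultimately show ?thesis
    using int_X int_dev by (simp add: prob_space power2_eq_square)
qed

lemma (in prob_space) indep_normal_product_moment:
  fixes X :: "'i \<Rightarrow> 'a \<Rightarrow> real"
  assumes indep: "indep_vars (\<lambda>_. borel) X I" and "i \<in> I" "j \<in> I" "0 < \<sigma>"
    and Xi: "distributed M lborel (X i) (\<lambda>x. ennreal (normal_density \<mu> \<sigma> x))"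
    and Xj: "distributed M lborel (X j) (\<lambda>x. ennreal (normal_density \<mu> \<sigma> x))"
  shows "integrable M (\<lambda>\<omega>. X i \<omega> * X j \<omega>)
    \<and> expectation (\<lambda>\<omega>. X i \<omega> * X j \<omega>) = \<mu>\<^sup>2 + (if i = j then \<sigma>\<^sup>2 else 0)"
proof (cases "i = j")
  case True
  then show ?thesis
    using normal_distributed_second_moment[OF \<open>0 < \<sigma>\<close> Xi] by (simp add: power2_eq_square)
next
  case False
  have int: "integrable M (X i)" "integrable M (X j)"
    using integrable_normal_distributed \<open>0 < \<sigma>\<close> Xi Xj by blast+
  have "integrable M (\<lambda>\<omega>. X i \<omega> * X j \<omega>)
    \<and> expectation (\<lambda>\<omega>. X i \<omega> * X j \<omega>) = expectation (X i) * expectation (X j)"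
    by (rule indep_vars_integral_mult[OF indep, where A = "{i}" and B = "{j}" and f = "\<lambda>x. x i" and g = "\<lambda>x. x j"])
       (use False \<open>i \<in> I\<close> \<open>j \<in> I\<close> int in auto)
  then show ?thesis
    using False normal_distributed_expectation[OF \<open>0 < \<sigma>\<close>] Xi Xj by (simp add: power2_eq_square)
qed

lemma (in prob_space) second_moments_of_sum:
  fixes X :: "'i \<Rightarrow> 'a \<Rightarrow> real" and a b :: real
  assumes "finite S"
    and moments: "\<And>i j. i \<in> S \<Longrightarrow> j \<in> S \<Longrightarrow> integrable M (\<lambda>\<omega>. X i \<omega> * X j \<omega>)
      \<and> expectation (\<lambda>\<omega>. X i \<omega> * X j \<omega>) = a + (if i = j then b else 0)"
  shows "integrable M (\<lambda>\<omega>. (\<Sum>i\<in>S. X i \<omega>)\<^sup>2)"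
    and "expectation (\<lambda>\<omega>. (\<Sum>i\<in>S. X i \<omega>)\<^sup>2) = (card S)\<^sup>2 * a + card S * b"
    and "integrable M (\<lambda>\<omega>. \<Sum>i\<in>S. (X i \<omega>)\<^sup>2)"
    and "expectation (\<lambda>\<omega>. \<Sum>i\<in>S. (X i \<omega>)\<^sup>2) = card S * (a + b)"
proof -
  have sq_sum: "(\<lambda>\<omega>. (\<Sum>i\<in>S. X i \<omega>)\<^sup>2) = (\<lambda>\<omega>. \<Sum>i\<in>S. \<Sum>j\<in>S. X i \<omega> * X j \<omega>)"
    by (simp add: power2_eq_square sum_product)
  have sum_sq: "(\<lambda>\<omega>. \<Sum>i\<in>S. (X i \<omega>)\<^sup>2) = (\<lambda>\<omega>. \<Sum>i\<in>S. X i \<omega> * X i \<omega>)"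
    by (simp add: power2_eq_square)
  show "integrable M (\<lambda>\<omega>. (\<Sum>i\<in>S. X i \<omega>)\<^sup>2)" "integrable M (\<lambda>\<omega>. \<Sum>i\<in>S. (X i \<omega>)\<^sup>2)"
    unfolding sq_sum sum_sq using moments by auto
  have "expectation (\<lambda>\<omega>. (\<Sum>i\<in>S. X i \<omega>)\<^sup>2) = (\<Sum>i\<in>S. \<Sum>j\<in>S. a + (if i = j then b else 0))"
    unfolding sq_sum using moments by (simp add: Bochner_Integration.integral_sum)
  then show "expectation (\<lambda>\<omega>. (\<Sum>i\<in>S. X i \<omega>)\<^sup>2) = (card S)\<^sup>2 * a + card S * b"
    using \<open>finite S\<close> by (simp add: sum.distrib power2_eq_square algebra_simps)
  have "expectation (\<lambda>\<omega>. \<Sum>i\<in>S. (X i \<omega>)\<^sup>2) = (\<Sum>i\<in>S. a + b)"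
    unfolding sum_sq using moments by (simp add: Bochner_Integration.integral_sum)
  then show "expectation (\<lambda>\<omega>. \<Sum>i\<in>S. (X i \<omega>)\<^sup>2) = card S * (a + b)"
    by simp
qed

lemma (in prob_space) expectation_sum_sq_dev:
  fixes X :: "'i \<Rightarrow> 'a \<Rightarrow> real" and a b :: real
  assumes "finite S" "S \<noteq> {}"
    and moments: "\<And>i j. i \<in> S \<Longrightarrow> j \<in> S \<Longrightarrow> integrable M (\<lambda>\<omega>. X i \<omega> * X j \<omega>)
      \<and> expectation (\<lambda>\<omega>. X i \<omega> * X j \<omega>) = a + (if i = j then b else 0)"
  shows "integrable M (\<lambda>\<omega>. \<Sum>i\<in>S. (X i \<omega> - (\<Sum>j\<in>S. X j \<omega>) / card S)\<^sup>2)
    \<and> expectation (\<lambda>\<omega>. \<Sum>i\<in>S. (X i \<omega> - (\<Sum>j\<in>S. X j \<omega>) / card S)\<^sup>2) = (card S - 1) * b"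
proof -
  have "card S > 0"
    using assms(1,2) by (simp add: card_gt_0_iff)
  moreover have "(\<lambda>\<omega>. \<Sum>i\<in>S. (X i \<omega> - (\<Sum>j\<in>S. X j \<omega>) / card S)\<^sup>2)
      = (\<lambda>\<omega>. (\<Sum>i\<in>S. (X i \<omega>)\<^sup>2) - (\<Sum>i\<in>S. X i \<omega>)\<^sup>2 / card S)"
    using \<open>finite S\<close> by (simp add: sum_sq_dev_eq)
  ultimately show ?thesis
    using second_moments_of_sum[OF \<open>finite S\<close> moments]
    by (simp add: power2_eq_square field_simps)
qed

lemma (in prob_space) expectation_average_const:
  assumes "0 < D" and "\<And>d. d < D \<Longrightarrow> integrable M (F d) \<and> expectation (F d) = c"
  shows "expectation (\<lambda>\<omega>. (\<Sum>d<D. F d \<omega>) / real D) = c"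
  using assms by (simp add: Bochner_Integration.integral_sum)

lemma sum_Ycomp:
  assumes "nobs \<le> n"
  shows "(\<Sum>i<n. Ycomp nobs cM Y Z d i \<omega>)
    = real n * ybar_obs nobs Y \<omega> + sqrt (sigma2_obs_M nobs cM Y \<omega>) * (\<Sum>i\<in>{nobs..<n}. Z i d \<omega>)"
proof -
  have split: "{..<n} = {..<nobs} \<union> {nobs..<n}" "{..<nobs} \<inter> {nobs..<n} = {}"
    using assms by auto
  have "(\<Sum>i<nobs. Y i \<omega>) = real nobs * ybar_obs nobs Y \<omega>"
    by (cases "nobs = 0") (simp_all add: ybar_obs_def)
  then show ?thesis
    using assms unfolding split(1)
    by (simp add: sum.union_disjoint[OF _ _ split(2)] Ycomp_def sum.distrib sum_distrib_left
        algebra_simps)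
qed

lemma mu_SI_eq:
  assumes "nobs \<le> n"
  shows "mu_SI n nobs cM Y Z d \<omega>
    = ybar_obs nobs Y \<omega> + sqrt (sigma2_obs_M nobs cM Y \<omega>) * (\<Sum>i\<in>{nobs..<n}. Z i d \<omega>) / real n"
  using sum_Ycomp[OF assms] assms by (cases "n = 0") (simp_all add: mu_SI_def field_simps ybar_obs_def)

lemma sigma2_SI_eq:
  assumes "nobs \<le> n" "0 \<le> sigma2_obs_M nobs cM Y \<omega>"
  shows "sigma2_SI n nobs cM Y Z d \<omega> = (CSS nobs Y \<omega> + sigma2_obs_M nobs cM Y \<omega>
      * ((\<Sum>i\<in>{nobs..<n}. (Z i d \<omega>)\<^sup>2) - (\<Sum>i\<in>{nobs..<n}. Z i d \<omega>)\<^sup>2 / real n)) / (real n - 1)"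
proof -
  let ?x = "\<lambda>i. Ycomp nobs cM Y Z d i \<omega>" and ?y = "ybar_obs nobs Y \<omega>"
    and ?v = "sigma2_obs_M nobs cM Y \<omega>" and ?W = "\<Sum>i\<in>{nobs..<n}. Z i d \<omega>"
  have split: "{..<n} = {..<nobs} \<union> {nobs..<n}" "{..<nobs} \<inter> {nobs..<n} = {}"
    using assms by auto
  have "(\<Sum>i<n. (?x i - ?y)\<^sup>2) = CSS nobs Y \<omega> + ?v * (\<Sum>i\<in>{nobs..<n}. (Z i d \<omega>)\<^sup>2)"
    using assms unfolding split(1)
    by (simp add: sum.union_disjoint[OF _ _ split(2)] Ycomp_def CSS_def power_mult_distrib
        sum_distrib_left)
  moreover have "real n * ((\<Sum>i<n. ?x i) / real n - ?y)\<^sup>2 = ?v * ?W\<^sup>2 / real n"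
    using mu_SI_eq[OF assms(1), of cM Y Z d \<omega>] assms(2)
    by (cases "n = 0") (simp_all add: mu_SI_def power_mult_distrib power_divide power2_eq_square)
  ultimately show ?thesis
    using sum_sq_dev_shift[of "{..<n}" ?x ?y]
    by (simp add: sigma2_SI_def mu_SI_def algebra_simps)
qed

(* The observed-data variance estimate as a function of the vector of observations;
   the sample point () is a dummy. *)
lemma sigma2_obs_M_restrict:
  "sigma2_obs_M nobs cM Y \<omega> = sigma2_obs_M nobs cM (\<lambda>i _. (\<lambda>i\<in>{..<nobs}. Y i \<omega>) i) ()"
  by (simp add: sigma2_obs_M_def CSS_def ybar_obs_def)

lemma borel_measurable_sigma2_obs_M:
  "(\<lambda>y. sigma2_obs_M nobs cM (\<lambda>i _. y i) ()) \<in> borel_measurable (PiM {..<nobs} (\<lambda>_. borel))"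
  unfolding sigma2_obs_M_def CSS_def ybar_obs_def by measurable

locale ml_imputation = prob_space M for M :: "'a measure" +
  fixes Y :: "nat \<Rightarrow> 'a \<Rightarrow> real" and Z :: "nat \<Rightarrow> nat \<Rightarrow> 'a \<Rightarrow> real"
    and nobs n D :: nat and \<mu> \<sigma> cM :: real
  assumes nobs_pos: "0 < nobs" and nobs_le_n: "nobs \<le> n"
    and sigma_pos: "0 < \<sigma>" and variance_divisor_pos: "0 < real nobs - 1 + cM"
    and indep: "indep_vars (\<lambda>_. borel) (joint_family Y Z)
      (Inl ` {..<nobs} \<union> Inr ` ({nobs..<n} \<times> {..<D}))"
    and Y_normal: "\<And>i. i < nobs \<Longrightarrow> distributed M lborel (Y i) (\<lambda>x. ennreal (normal_density \<mu> \<sigma> x))"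
    and Z_normal: "\<And>i d. nobs \<le> i \<Longrightarrow> i < n \<Longrightarrow> d < D \<Longrightarrow>
      distributed M lborel (Z i d) (\<lambda>x. ennreal (std_normal_density x))"
begin

lemma Y_product_moment:
  assumes "i < nobs" "j < nobs"
  shows "integrable M (\<lambda>\<omega>. Y i \<omega> * Y j \<omega>)
    \<and> expectation (\<lambda>\<omega>. Y i \<omega> * Y j \<omega>) = \<mu>\<^sup>2 + (if i = j then \<sigma>\<^sup>2 else 0)"
  using indep_normal_product_moment[OF indep, of "Inl i" "Inl j" \<sigma> \<mu>] assms sigma_pos Y_normal
  by (simp add: joint_family_def)

lemma Z_product_moment:
  assumes "i \<in> {nobs..<n}" "j \<in> {nobs..<n}" "d < D"
  shows "integrable M (\<lambda>\<omega>. Z i d \<omega> * Z j d \<omega>)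
    \<and> expectation (\<lambda>\<omega>. Z i d \<omega> * Z j d \<omega>) = 0 + (if i = j then 1 else 0)"
  using indep_normal_product_moment[OF indep, of "Inr (i, d)" "Inr (j, d)" 1 0] assms Z_normal
  by (simp add: joint_family_def)

lemma expectation_ybar_obs: "integrable M (ybar_obs nobs Y) \<and> expectation (ybar_obs nobs Y) = \<mu>"
proof -
  have "integrable M (Y i)" "expectation (Y i) = \<mu>" if "i < nobs" for i
    using integrable_normal_distributed normal_distributed_expectation sigma_pos Y_normal[OF that]
    by blast+
  then have "integrable M (\<lambda>\<omega>. \<Sum>i<nobs. Y i \<omega>)" "expectation (\<lambda>\<omega>. \<Sum>i<nobs. Y i \<omega>) = nobs * \<mu>"
    by (auto simp: Bochner_Integration.integral_sum)
  then show ?thesis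
    using nobs_pos by (simp add: ybar_obs_def[abs_def])
qed

lemma expectation_CSS: "integrable M (CSS nobs Y) \<and> expectation (CSS nobs Y) = (real nobs - 1) * \<sigma>\<^sup>2"
  using expectation_sum_sq_dev[of "{..<nobs}" Y "\<mu>\<^sup>2" "\<sigma>\<^sup>2"] Y_product_moment nobs_pos
  by (auto simp: CSS_def[abs_def] ybar_obs_def)

lemma sigma2_obs_M_nonneg: "0 \<le> sigma2_obs_M nobs cM Y \<omega>"
  using variance_divisor_pos by (simp add: sigma2_obs_M_def CSS_def sum_nonneg)

lemma expectation_sigma2_obs_M:
  "integrable M (sigma2_obs_M nobs cM Y)
    \<and> expectation (sigma2_obs_M nobs cM Y) = (real nobs - 1) * \<sigma>\<^sup>2 / (real nobs - 1 + cM)"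
  using expectation_CSS by (simp add: sigma2_obs_M_def[abs_def])

lemma integrable_sqrt_sigma2_obs_M: "integrable M (\<lambda>\<omega>. sqrt (sigma2_obs_M nobs cM Y \<omega>))"
proof (rule Bochner_Integration.integrable_bound)
  show "integrable M (\<lambda>\<omega>. 1 + sigma2_obs_M nobs cM Y \<omega>)"
    using expectation_sigma2_obs_M by simp
  have "sqrt v \<le> 1 + v" if "0 \<le> v" for v :: real
    by (rule power2_le_imp_le) (use that in \<open>auto simp: power2_eq_square algebra_simps\<close>)
  then show "AE \<omega> in M. norm (sqrt (sigma2_obs_M nobs cM Y \<omega>)) \<le> norm (1 + sigma2_obs_M nobs cM Y \<omega>)"
    using sigma2_obs_M_nonneg by simp
  show "(\<lambda>\<omega>. sqrt (sigma2_obs_M nobs cM Y \<omega>)) \<in> borel_measurable M"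
    using borel_measurable_integrable[of M "sigma2_obs_M nobs cM Y"] expectation_sigma2_obs_M
    by simp
qed

lemma expectation_imputation_sum:
  assumes "d < D"
  shows "integrable M (\<lambda>\<omega>. \<Sum>i\<in>{nobs..<n}. Z i d \<omega>)
    \<and> expectation (\<lambda>\<omega>. \<Sum>i\<in>{nobs..<n}. Z i d \<omega>) = 0"
proof -
  have "integrable M (Z i d) \<and> expectation (Z i d) = 0" if "i \<in> {nobs..<n}" for i
    using that assms integrable_normal_distributed[of 1, OF _ Z_normal]
      standard_normal_distributed_expectation[OF Z_normal] by simp
  then show ?thesis
    by (auto simp: Bochner_Integration.integral_sum)
qed

lemma expectation_imputation_sum_sq_dev:
  assumes "d < D"
  shows "integrable M (\<lambda>\<omega>. (\<Sum>i\<in>{nobs..<n}. (Z i d \<omega>)\<^sup>2) - (\<Sum>i\<in>{nobs..<n}. Z i d \<omega>)\<^sup>2 / real n)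
    \<and> expectation (\<lambda>\<omega>. (\<Sum>i\<in>{nobs..<n}. (Z i d \<omega>)\<^sup>2) - (\<Sum>i\<in>{nobs..<n}. Z i d \<omega>)\<^sup>2 / real n)
      = real (n - nobs) * (1 - 1 / real n)"
proof -
  note moments = second_moments_of_sum[of "{nobs..<n}" "\<lambda>i. Z i d" 0 1, OF _ Z_product_moment[OF _ _ assms]]
  show ?thesis
    using moments(1,3) moments(2,4)[simplified] by (simp add: right_diff_distrib)
qed

lemma observed_imputed_integral_mult:
  fixes F G :: "'a \<Rightarrow> real" and f g :: "(nat \<Rightarrow> real) \<Rightarrow> real"
  assumes "d < D"
    and f: "f \<in> borel_measurable (PiM {..<nobs} (\<lambda>_. borel))"
    and g: "g \<in> borel_measurable (PiM {nobs..<n} (\<lambda>_. borel))"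
    and F: "\<And>\<omega>. F \<omega> = f (\<lambda>i\<in>{..<nobs}. Y i \<omega>)"
    and G: "\<And>\<omega>. G \<omega> = g (\<lambda>i\<in>{nobs..<n}. Z i d \<omega>)"
    and "integrable M F" "integrable M G"
  shows "integrable M (\<lambda>\<omega>. F \<omega> * G \<omega>) \<and> expectation (\<lambda>\<omega>. F \<omega> * G \<omega>) = expectation F * expectation G"
proof (rule indep_vars_integral_mult[OF indep, where A = "Inl ` {..<nobs}" and B = "Inr ` ({nobs..<n} \<times> {d})"
      and f = "\<lambda>x. f (\<lambda>i\<in>{..<nobs}. x (Inl i))" and g = "\<lambda>x. g (\<lambda>i\<in>{nobs..<n}. x (Inr (i, d)))"
      and F = F and G = G])
  show "(\<lambda>x. f (\<lambda>i\<in>{..<nobs}. x (Inl i))) \<in> borel_measurable (PiM (Inl ` {..<nobs}) (\<lambda>_. borel))"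
    using f by measurable
  show "(\<lambda>x. g (\<lambda>i\<in>{nobs..<n}. x (Inr (i, d)))) \<in> borel_measurable (PiM (Inr ` ({nobs..<n} \<times> {d})) (\<lambda>_. borel))"
    using g by measurable
  show "F \<omega> = f (\<lambda>i\<in>{..<nobs}. (\<lambda>k\<in>Inl ` {..<nobs}. joint_family Y Z k \<omega>) (Inl i))" for \<omega>
    unfolding F by (rule arg_cong[of _ _ f]) (auto simp: joint_family_def)
  show "G \<omega> = g (\<lambda>i\<in>{nobs..<n}. (\<lambda>k\<in>Inr ` ({nobs..<n} \<times> {d}). joint_family Y Z k \<omega>) (Inr (i, d)))" for \<omega>
    unfolding G by (rule arg_cong[of _ _ g]) (auto simp: joint_family_def)
qed (use assms in auto)

lemma expectation_mu_SI:
  assumes "d < D"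
  shows "integrable M (mu_SI n nobs cM Y Z d) \<and> expectation (mu_SI n nobs cM Y Z d) = \<mu>"
proof -
  let ?s = "\<lambda>\<omega>. sqrt (sigma2_obs_M nobs cM Y \<omega>)" and ?W = "\<lambda>\<omega>. \<Sum>i\<in>{nobs..<n}. Z i d \<omega>"
  have "integrable M (\<lambda>\<omega>. ?s \<omega> * ?W \<omega>) \<and> expectation (\<lambda>\<omega>. ?s \<omega> * ?W \<omega>) = expectation ?s * expectation ?W"
    by (rule observed_imputed_integral_mult[OF assms, where F = ?s and G = ?W
          and f = "\<lambda>y. sqrt (sigma2_obs_M nobs cM (\<lambda>i _. y i) ())" and g = "\<lambda>z. \<Sum>i\<in>{nobs..<n}. z i"])
       (use sigma2_obs_M_restrict borel_measurable_sigma2_obs_M integrable_sqrt_sigma2_obs_M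
         expectation_imputation_sum[OF assms] in auto)
  then show ?thesis
    using expectation_ybar_obs expectation_imputation_sum[OF assms]
    by (simp add: mu_SI_eq[OF nobs_le_n, abs_def])
qed

lemma expectation_sigma2_SI:
  assumes "d < D"
  shows "integrable M (sigma2_SI n nobs cM Y Z d) \<and> expectation (sigma2_SI n nobs cM Y Z d)
    = ((real nobs - 1) * \<sigma>\<^sup>2
        + (real nobs - 1) * \<sigma>\<^sup>2 / (real nobs - 1 + cM) * (real (n - nobs) * (1 - 1 / real n)))
      / (real n - 1)"
proof -
  let ?v = "sigma2_obs_M nobs cM Y"
    and ?V = "\<lambda>\<omega>. (\<Sum>i\<in>{nobs..<n}. (Z i d \<omega>)\<^sup>2) - (\<Sum>i\<in>{nobs..<n}. Z i d \<omega>)\<^sup>2 / real n"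
  have "integrable M (\<lambda>\<omega>. ?v \<omega> * ?V \<omega>) \<and> expectation (\<lambda>\<omega>. ?v \<omega> * ?V \<omega>) = expectation ?v * expectation ?V"
    by (rule observed_imputed_integral_mult[OF assms, where F = ?v and G = ?V
          and f = "\<lambda>y. sigma2_obs_M nobs cM (\<lambda>i _. y i) ()"
          and g = "\<lambda>z. (\<Sum>i\<in>{nobs..<n}. (z i)\<^sup>2) - (\<Sum>i\<in>{nobs..<n}. z i)\<^sup>2 / real n"])
       (use sigma2_obs_M_restrict borel_measurable_sigma2_obs_M expectation_sigma2_obs_M
         expectation_imputation_sum_sq_dev[OF assms] in auto)
  moreover have "sigma2_SI n nobs cM Y Z d = (\<lambda>\<omega>. (CSS nobs Y \<omega> + ?v \<omega> * ?V \<omega>) / (real n - 1))"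
    using sigma2_SI_eq[OF nobs_le_n sigma2_obs_M_nonneg] by blast
  ultimately show ?thesis
    using expectation_CSS expectation_sigma2_obs_M expectation_imputation_sum_sq_dev[OF assms]
    by simp
qed

end

lemma imputation_variance_bias_eq:
  fixes x m s cM N :: real
  assumes "N = x + m" "N \<noteq> 0" "N \<noteq> 1" "x - 1 + cM \<noteq> 0"
  shows "((x - 1) * s + (x - 1) * s / (x - 1 + cM) * (m * (1 - 1 / N))) / (N - 1) - s
    = - s * (m * (cM * N + x - 1)) / ((N - 1) * N * (cM + x - 1))"
proof -
  \<comment> \<open>With K atomic, field_simps can clear the denominator cM + x - 1 = K.\<close>
  define K where "K = x - 1 + cM"
  have cM: "cM = K - x + 1" and m: "m = N - x" and "K \<noteq> 0"
    using assms by (auto simp: K_def)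
  show ?thesis
    unfolding cM m using \<open>K \<noteq> 0\<close> assms(2,3) by (simp add: field_simps)
qed

theorem mainTheorem3:
  fixes M :: "'a measure" and Y :: "nat \<Rightarrow> 'a \<Rightarrow> real" and Z :: "nat \<Rightarrow> nat \<Rightarrow> 'a \<Rightarrow> real"
    and nobs nmis n D :: nat and \<mu> \<sigma> cM :: real
  assumes "prob_space M"
    and "nobs \<ge> 2" and "nmis \<ge> 1" and "n = nobs + nmis" and "D \<ge> 1"
    and "\<sigma> > 0"
    and "real nobs - 1 + cM > 0"
    and "prob_space.indep_vars M (\<lambda>_. borel) (joint_family Y Z)
           (Inl ` {..<nobs} \<union> Inr ` ({nobs..<n} \<times> {..<D}))"
    and "\<And>i. i < nobs \<Longrightarrow> distributed M lborel (Y i) (\<lambda>x. ennreal (normal_density \<mu> \<sigma> x))"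
    and "\<And>i d. nobs \<le> i \<Longrightarrow> i < n \<Longrightarrow> d < D \<Longrightarrow>
           distributed M lborel (Z i d) (\<lambda>x. ennreal (std_normal_density x))"
  shows "(\<integral>\<omega>. mu_MI D n nobs cM Y Z \<omega> \<partial>M) = \<mu>
    \<and> (\<integral>\<omega>. sigma2_MI D n nobs cM Y Z \<omega> \<partial>M) - \<sigma>\<^sup>2
        = - \<sigma>\<^sup>2 * (real nmis * (cM * real n + real nobs - 1))
            / ((real n - 1) * real n * (cM + real nobs - 1))"
proof -
  interpret ml_imputation M Y Z nobs n D \<mu> \<sigma> cM
    by (intro ml_imputation.intro ml_imputation_axioms.intro assms(1,6,8,9,10)) (use assms(2,4,7) in auto)
  have "0 < D" using \<open>D \<ge> 1\<close> by simp
  have "(\<integral>\<omega>. mu_MI D n nobs cM Y Z \<omega> \<partial>M) = \<mu>"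
    unfolding mu_MI_def using expectation_average_const[OF \<open>0 < D\<close> expectation_mu_SI] .
  moreover have "(\<integral>\<omega>. sigma2_MI D n nobs cM Y Z \<omega> \<partial>M)
    = ((real nobs - 1) * \<sigma>\<^sup>2
        + (real nobs - 1) * \<sigma>\<^sup>2 / (real nobs - 1 + cM) * (real nmis * (1 - 1 / real n)))
      / (real n - 1)"
    unfolding sigma2_MI_def using expectation_average_const[OF \<open>0 < D\<close> expectation_sigma2_SI]
    by (simp add: \<open>n = nobs + nmis\<close>)
  moreover have "real n = real nobs + real nmis" "real n \<noteq> 0" "real n \<noteq> 1" "real nobs - 1 + cM \<noteq> 0"
    using assms(2,4,7) by auto
  ultimately show ?thesis
    using imputation_variance_bias_eq[where N = "real n" and x = "real nobs" and m = "real nmis" and s = "\<sigma>\<^sup>2"]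
    by simp
qed

end
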